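(* The set $\{2,3\}$ is not a $\delta$-set.
   Context: All graphs are finite and simple; $d(u,v)$ denotes the usual graph distance (infinite between different components). For a set $J$ of nonnegative integers, a distance $J$-labeling of $G$ is a function $f:V(G)\to J$ with $f(V(G))=J$ such that whenever two distinct vertices $u,v$ satisfy $f(u)=f(v)=k$, we have $d(u,v)=k$. It is proper if every $k\in J\setminus\{0\}$ is the label of at least two vertices. A finite set $\Sigma$ of nonnegative integers is a $\delta$-set if there exists a graph admitting a proper distance $\Sigma$-labeling. *)

theory Defs
  imports Main "HOL-Library.Extended_Nat"
begin

definition simple_graph :: "'a set \<Rightarrow> ('a \<Rightarrow> 'a \<Rightarrow> bool) \<Rightarrow> bool" where
  "simple_graph V E \<longleftrightarrow> finite V \<and> (\<forall>u v. E u v \<longrightarrow> u \<in> V \<and> v \<in> V)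
     \<and> (\<forall>u v. E u v \<longrightarrow> E v u) \<and> (\<forall>u. \<not> E u u)"

definition gdist :: "('a \<Rightarrow> 'a \<Rightarrow> bool) \<Rightarrow> 'a \<Rightarrow> 'a \<Rightarrow> enat" where
  "gdist E u v = (INF n \<in> {n. (u, v) \<in> {(x, y). E x y} ^^ n}. enat n)"

definition distance_labeling ::
  "'a set \<Rightarrow> ('a \<Rightarrow> 'a \<Rightarrow> bool) \<Rightarrow> nat set \<Rightarrow> ('a \<Rightarrow> nat) \<Rightarrow> bool" where
  "distance_labeling V E J f \<longleftrightarrow> f ` V = J \<and>
     (\<forall>u\<in>V. \<forall>v\<in>V. u \<noteq> v \<and> f u = f v \<longrightarrow> gdist E u v = enat (f u))"

definition proper_distance_labeling ::
  "'a set \<Rightarrow> ('a \<Rightarrow> 'a \<Rightarrow> bool) \<Rightarrow> nat set \<Rightarrow> ('a \<Rightarrow> nat) \<Rightarrow> bool" where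
  "proper_distance_labeling V E J f \<longleftrightarrow> distance_labeling V E J f \<and>
     (\<forall>k \<in> J - {0}. \<exists>u\<in>V. \<exists>v\<in>V. u \<noteq> v \<and> f u = k \<and> f v = k)"

text \<open>Since every finite graph is isomorphic to one on any infinite vertex type,
  delta-sets are exactly the sets with delta_set_on (UNIV::nat set) \<Sigma>.\<close>
definition delta_set_on :: "'a itself \<Rightarrow> nat set \<Rightarrow> bool" where
  "delta_set_on _ \<Sigma> \<longleftrightarrow> finite \<Sigma> \<and>
     (\<exists>(V::'a set) E f. simple_graph V E \<and> proper_distance_labeling V E \<Sigma> f)"

end

theory Submission
  imports Defs
begin

text \<open>Two vertices labelled 3 lie at distance 3, so they are joined by a walk
  \<open>a - x - y - b\<close>. Since no label is 1, adjacent vertices carry different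
  labels; with only the labels 2 and 3 available, the labels along the walk
  must alternate \<open>3, 2, 3, 2\<close>, contradicting \<open>f b = 3\<close>.\<close>

lemma gdist_le_1_if_edge:
  assumes "E u v"
  shows "gdist E u v \<le> enat 1"
proof -
  have "(u, v) \<in> {(x, y). E x y} ^^ 1" using assms by simp
  then show ?thesis unfolding gdist_def by (rule INF_lower[where f = enat, OF CollectI])
qed

lemma relpow_if_gdist_eq_enat:
  assumes "gdist E u v = enat k"
  shows "(u, v) \<in> {(x, y). E x y} ^^ k"
proof -
  let ?N = "{n. (u, v) \<in> {(x, y). E x y} ^^ n}"
  have "?N \<noteq> {}"
  proof
    assume "?N = {}"
    then have "gdist E u v = \<infinity>" unfolding gdist_def by (simp add: top_enat_def)
    with assms show False by simp
  qed
  then obtain n0 where n0: "n0 \<in> ?N" by blast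
  define m where "m = (LEAST n. n \<in> ?N)"
  have m: "m \<in> ?N" unfolding m_def using n0 by (rule LeastI)
  have "gdist E u v = enat m"
  proof (rule antisym)
    show "gdist E u v \<le> enat m" unfolding gdist_def by (rule INF_lower[OF m])
    show "enat m \<le> gdist E u v" unfolding gdist_def
      by (rule INF_greatest) (simp add: m_def Least_le)
  qed
  with assms m show ?thesis by simp
qed

lemma walk3_if_gdist_eq_3:
  assumes "gdist E a b = enat 3"
  obtains x y where "E a x" "E x y" "E y b"
proof -
  have "(a, b) \<in> {(x, y). E x y} ^^ Suc (Suc (Suc 0))"
    using relpow_if_gdist_eq_enat[OF assms] by (simp add: numeral_3_eq_3)
  then show ?thesis using that by (auto simp: relcomp_unfold)
qed

lemma distance_labeling_adjacent_labels_differ: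
  assumes "simple_graph V E" "distance_labeling V E J f" "1 \<notin> J" "E u v"
  shows "f u \<noteq> f v"
proof
  assume same: "f u = f v"
  have uv: "u \<in> V" "v \<in> V" "u \<noteq> v"
    using assms(1,4) unfolding simple_graph_def by metis+
  then have dist: "gdist E u v = enat (f u)"
    using assms(2) same unfolding distance_labeling_def by blast
  with gdist_le_1_if_edge[of E u v] assms(4) have "f u \<le> 1" by simp
  moreover have "f u \<in> J" using assms(2) uv unfolding distance_labeling_def by blast
  ultimately have "f u = 0" using assms(3) by (cases "f u") auto
  with relpow_if_gdist_eq_enat[OF dist] have "u = v" by simp
  with uv show False by simp
qed

theorem mainTheorem10:
  shows "\<not> delta_set_on TYPE('a) {2, 3}"
proof
  assume "delta_set_on TYPE('a) {2, 3}"
  then obtain V :: "'a set" and E f where graph: "simple_graph V E"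
    and proper: "proper_distance_labeling V E {2, 3} f"
    unfolding delta_set_on_def by blast
  then have labeling: "distance_labeling V E {2, 3} f"
    unfolding proper_distance_labeling_def by blast
  from proper obtain a b where ab: "a \<in> V" "b \<in> V" "a \<noteq> b" "f a = 3" "f b = 3"
    unfolding proper_distance_labeling_def by force
  have "gdist E a b = enat 3"
    using labeling ab unfolding distance_labeling_def by simp
  then obtain x y where walk: "E a x" "E x y" "E y b" by (rule walk3_if_gdist_eq_3)
  have differ: "f u \<noteq> f v" if "E u v" for u v
    using distance_labeling_adjacent_labels_differ[OF graph labeling _ that] by simp
  have "f x \<in> {2, 3}" "f y \<in> {2, 3}"
    using graph labeling walk unfolding simple_graph_def distance_labeling_def by blast+
  with differ[OF walk(1)] differ[OF walk(2)] differ[OF walk(3)] ab(4,5) show False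
    by auto
qed

end
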